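(* Suppose $k^2$ is not real. Let $u \in C^2(\mathcal{X}, F^i)$ and $f \in C^2(\mathcal{X}, F^{i+1})$ satisfy $M^i(u, f) = 0$ in $\mathcal{X}$. Either of the conditions $t(u) = 0$ and $n(f) = 0$ on $\partial\mathcal{X}$ implies $(u, f) \equiv 0$ in all of $\mathcal{X}$.
   Context: $\mathcal{X}$ is a compact manifold with boundary (with smooth positive volume form), carrying an elliptic complex of first order differential operators $A^i: C^\infty(\mathcal{X},F^i)\to C^\infty(\mathcal{X},F^{i+1})$, $A^{i+1}A^i=0$, between Hermitian vector bundles, with formal adjoints $A^{i*}$. The Maxwell operator at step $i$ is $M^i = \begin{pmatrix} \imath k & A^{i*} \\ A^i & -\imath k \end{pmatrix}$ with $k$ a complex number. $t(u)$ denotes the tangential part of $u$ and $n(f)$ the normal part of $f$ on $\partial\mathcal{X}$ relative to the complex (so that Green's formula $(Au,g)=(u,A^*g)$ holds when $t(u)=0$ or $n(g)=0$). *)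

theory Defs
  imports "HOL-Analysis.Analysis"
begin

text \<open>Abstract rendering of the analytic setting of the paper.
  'u : continuous sections of F^i over X, 'f : continuous sections of F^(i+1).
  Cu, Cf : the subspaces of C^2 sections.  scU, scF : multiplication by complex scalars.
  ipU, ipF : the L2 inner products (u,v) = integral over X of h(u,v) dvol,
  linear in the first and conjugate linear in the second argument.
  A : the first order operator A^i, As : its formal adjoint A^(i*).
  t : tangential part on the boundary, n : normal part on the boundary.\<close>

definition complex_vs :: "(complex \<Rightarrow> 'v::ab_group_add \<Rightarrow> 'v) \<Rightarrow> bool" where
  "complex_vs sc \<longleftrightarrow>
     (\<forall>a b v. sc a (b + v) = sc a b + sc a v) \<and>
     (\<forall>a b v. sc (a + b) v = sc a v + sc b v) \<and>
     (\<forall>a b v. sc a (sc b v) = sc (a * b) v) \<and>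
     (\<forall>v. sc 1 v = v)"

definition hermitian_ip ::
  "(complex \<Rightarrow> 'v::ab_group_add \<Rightarrow> 'v) \<Rightarrow> ('v \<Rightarrow> 'v \<Rightarrow> complex) \<Rightarrow> bool" where
  "hermitian_ip sc ip \<longleftrightarrow>
     (\<forall>u v w. ip (u + v) w = ip u w + ip v w) \<and>
     (\<forall>a u w. ip (sc a u) w = a * ip u w) \<and>
     (\<forall>u w. ip w u = cnj (ip u w)) \<and>
     (\<forall>u. ip u u \<in> \<real> \<and> Re (ip u u) \<ge> 0) \<and>
     (\<forall>u. ip u u = 0 \<longrightarrow> u = 0)"

definition complex_linear ::
  "(complex \<Rightarrow> 'v::ab_group_add \<Rightarrow> 'v) \<Rightarrow> (complex \<Rightarrow> 'w::ab_group_add \<Rightarrow> 'w) \<Rightarrow> 'v set \<Rightarrow> ('v \<Rightarrow> 'w) \<Rightarrow> bool" where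
  "complex_linear scV scW S L \<longleftrightarrow>
     (\<forall>u\<in>S. \<forall>v\<in>S. L (u + v) = L u + L v) \<and> (\<forall>a. \<forall>u\<in>S. L (scV a u) = scW a (L u))"

definition subspace_of :: "(complex \<Rightarrow> 'v::ab_group_add \<Rightarrow> 'v) \<Rightarrow> 'v set \<Rightarrow> bool" where
  "subspace_of sc S \<longleftrightarrow> 0 \<in> S \<and> (\<forall>u\<in>S. \<forall>v\<in>S. u + v \<in> S) \<and> (\<forall>a. \<forall>u\<in>S. sc a u \<in> S)"

text \<open>The data of step i of the complex together with Green's formula
  (A u, g) = (u, A^* g) whenever t(u) = 0 or n(g) = 0.\<close>
definition green_setting ::
  "(complex \<Rightarrow> 'u::ab_group_add \<Rightarrow> 'u) \<Rightarrow> (complex \<Rightarrow> 'f::ab_group_add \<Rightarrow> 'f) \<Rightarrow>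
   ('u \<Rightarrow> 'u \<Rightarrow> complex) \<Rightarrow> ('f \<Rightarrow> 'f \<Rightarrow> complex) \<Rightarrow> 'u set \<Rightarrow> 'f set \<Rightarrow>
   ('u \<Rightarrow> 'f) \<Rightarrow> ('f \<Rightarrow> 'u) \<Rightarrow> ('u \<Rightarrow> 'bt::zero) \<Rightarrow> ('f \<Rightarrow> 'bn::zero) \<Rightarrow> bool" where
  "green_setting scU scF ipU ipF Cu Cf A As t n \<longleftrightarrow>
     complex_vs scU \<and> complex_vs scF \<and> hermitian_ip scU ipU \<and> hermitian_ip scF ipF \<and>
     subspace_of scU Cu \<and> subspace_of scF Cf \<and>
     complex_linear scU scF Cu A \<and> complex_linear scF scU Cf As \<and>
     (\<forall>u\<in>Cu. \<forall>g\<in>Cf. (t u = 0 \<or> n g = 0) \<longrightarrow> ipF (A u) g = ipU u (As g))"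

text \<open>Maxwell operator M^i = [[ik, A^*],[A, -ik]] applied to (u,f).\<close>
definition maxwell ::
  "(complex \<Rightarrow> 'u::ab_group_add \<Rightarrow> 'u) \<Rightarrow> (complex \<Rightarrow> 'f::ab_group_add \<Rightarrow> 'f) \<Rightarrow>
   ('u \<Rightarrow> 'f) \<Rightarrow> ('f \<Rightarrow> 'u) \<Rightarrow> complex \<Rightarrow> 'u \<Rightarrow> 'f \<Rightarrow> 'u \<times> 'f" where
  "maxwell scU scF A As k u f = (scU (\<i> * k) u + As f, A u + scF (- \<i> * k) f)"

end

theory Submission
  imports Defs
begin

text \<open>For a solution of the Maxwell system, Green's formula turns the equations
  A u = \<i>k f and A^* f = -\<i>k u into the energy identity k (f, f) = cnj k (u, u).
  Taking moduli gives (f, f) = (u, u), and if this common norm were nonzero the identity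
  would force k = cnj k, i.e. k real, contradicting k^2 non-real.\<close>

lemma complex_vs_scale_zero:
  assumes "complex_vs sc"
  shows "sc 0 v = 0"
proof -
  have "sc (0 + 0) v = sc 0 v + sc 0 v"
    using assms unfolding complex_vs_def by blast
  then show ?thesis by simp
qed

lemma complex_vs_scale_minus:
  assumes "complex_vs sc"
  shows "sc (- a) v = - sc a v"
proof -
  have "sc (a + - a) v = sc a v + sc (- a) v"
    using assms unfolding complex_vs_def by blast
  hence "sc a v + sc (- a) v = 0"
    by (simp add: complex_vs_scale_zero[OF assms])
  then show ?thesis
    by (metis add.commute add_eq_0_iff2)
qed

lemma maxwell_eq_zero_iff:
  assumes "complex_vs scU" and "complex_vs scF"
  shows "maxwell scU scF A As k u f = (0, 0) \<longleftrightarrow>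
           A u = scF (\<i> * k) f \<and> As f = scU (- (\<i> * k)) u"
proof -
  have "scF (- \<i> * k) f = - scF (\<i> * k) f"
    using complex_vs_scale_minus[OF assms(2)] by simp
  moreover have "scU (- (\<i> * k)) u = - scU (\<i> * k) u"
    using complex_vs_scale_minus[OF assms(1)] .
  ultimately show ?thesis
    unfolding maxwell_def by (auto simp: add_eq_0_iff2 add.commute)
qed

lemma hermitian_ip_scale_left:
  assumes "hermitian_ip sc ip"
  shows "ip (sc a u) v = a * ip u v"
  using assms unfolding hermitian_ip_def by blast

lemma hermitian_ip_scale_right:
  assumes "hermitian_ip sc ip"
  shows "ip u (sc a v) = cnj a * ip u v"
proof -
  have "ip u (sc a v) = cnj (ip (sc a v) u)"
    using assms unfolding hermitian_ip_def by blast
  also have "\<dots> = cnj a * cnj (ip v u)"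
    by (simp add: hermitian_ip_scale_left[OF assms])
  also have "cnj (ip v u) = ip u v"
    using assms unfolding hermitian_ip_def by metis
  finally show ?thesis .
qed

lemma hermitian_ip_self_eq_zero:
  assumes "hermitian_ip sc ip" and "ip v v = 0"
  shows "v = 0"
  using assms unfolding hermitian_ip_def by blast

lemma hermitian_ip_self_eq_of_real:
  assumes "hermitian_ip sc ip"
  obtains r where "ip v v = complex_of_real r" and "r \<ge> 0"
  using assms unfolding hermitian_ip_def by (metis Reals_cases Re_complex_of_real)

lemma maxwell_energy_identity:
  assumes "green_setting scU scF ipU ipF Cu Cf A As t n"
    and "u \<in> Cu" and "f \<in> Cf"
    and "maxwell scU scF A As k u f = (0, 0)"
    and "t u = 0 \<or> n f = 0"
  shows "k * ipF f f = cnj k * ipU u u"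
proof -
  have vs: "complex_vs scU" "complex_vs scF"
    and herm: "hermitian_ip scU ipU" "hermitian_ip scF ipF"
    and green: "ipF (A u) f = ipU u (As f)"
    using assms(1,2,3,5) unfolding green_setting_def by auto
  have "A u = scF (\<i> * k) f" and "As f = scU (- (\<i> * k)) u"
    using assms(4) maxwell_eq_zero_iff[OF vs] by auto
  with green have "\<i> * k * ipF f f = cnj (- (\<i> * k)) * ipU u u"
    by (simp add: hermitian_ip_scale_left[OF herm(2)] hermitian_ip_scale_right[OF herm(1)])
  then show ?thesis by simp
qed

lemma nonneg_balance_nonreal_eq_zero:
  fixes k :: complex and a b :: real
  assumes "k \<notin> \<real>" and "a \<ge> 0" and "b \<ge> 0"
    and balance: "k * a = cnj k * b"
  shows "a = 0 \<and> b = 0"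
proof -
  have "k \<noteq> 0" using assms(1) by auto
  have "cmod k * a = cmod k * b"
    using arg_cong[OF balance, of cmod] assms(2,3) by (simp add: norm_mult)
  with \<open>k \<noteq> 0\<close> have "a = b" by simp
  show ?thesis
  proof (rule ccontr)
    assume "\<not> (a = 0 \<and> b = 0)"
    with \<open>a = b\<close> balance have "k = cnj k" by simp
    with assms(1) show False by (metis Reals_cnj_iff)
  qed
qed

theorem lemma3p1:
  fixes scU :: "complex \<Rightarrow> 'u::ab_group_add \<Rightarrow> 'u" and scF :: "complex \<Rightarrow> 'f::ab_group_add \<Rightarrow> 'f"
    and ipU :: "'u \<Rightarrow> 'u \<Rightarrow> complex" and ipF :: "'f \<Rightarrow> 'f \<Rightarrow> complex"
    and Cu :: "'u set" and Cf :: "'f set" and A :: "'u \<Rightarrow> 'f" and As :: "'f \<Rightarrow> 'u"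
    and t :: "'u \<Rightarrow> 'bt::zero" and n :: "'f \<Rightarrow> 'bn::zero"
    and k :: complex and u :: 'u and f :: 'f
  assumes "green_setting scU scF ipU ipF Cu Cf A As t n"
    and "k\<^sup>2 \<notin> \<real>"
    and "u \<in> Cu" and "f \<in> Cf"
    and "maxwell scU scF A As k u f = (0, 0)"
    and "t u = 0 \<or> n f = 0"
  shows "u = 0 \<and> f = 0"
proof -
  have herm: "hermitian_ip scU ipU" "hermitian_ip scF ipF"
    using assms(1) unfolding green_setting_def by auto
  obtain U where U: "ipU u u = complex_of_real U" "U \<ge> 0"
    using hermitian_ip_self_eq_of_real[OF herm(1)] .
  obtain F where F: "ipF f f = complex_of_real F" "F \<ge> 0"
    using hermitian_ip_self_eq_of_real[OF herm(2)] .
  have "k \<notin> \<real>" using assms(2) by auto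
  moreover have "k * F = cnj k * U"
    using maxwell_energy_identity[OF assms(1,3-6)] U F by simp
  ultimately have "F = 0" and "U = 0"
    using nonneg_balance_nonreal_eq_zero U F by blast+
  then show ?thesis
    using U F hermitian_ip_self_eq_zero[OF herm(1)] hermitian_ip_self_eq_zero[OF herm(2)] by simp
qed

end
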